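(* Let $\mathbb{G}$ be a graph as described in the context, with root node $z_0$, let $\lambda$ be a nonnegative Borel measure on $\mathbb{G}$, and let $1 \le p < \infty$. Set $$c_1 := \left[ \frac{\min(1, \lambda(\mathbb{G})^{p-1})}{1 + \lambda(\mathbb{G})^{p}} \right]^{1/p}, \qquad c_2 := \left[\max(1, \lambda(\mathbb{G})^{p-1})\right]^{1/p}.$$ Then for every function $f \in W^{1,p}_0(\mathbb{G}, \lambda)$, $$c_1 \|f'\|_{L^p_{\hat w}} \le \|f\|_{W^{1,p}} \le c_2 \|f'\|_{L^p_{\hat w}}.$$
   Context: $\mathbb{G}=(V,E)$ is a connected, undirected graph with $V \subset \mathbb{R}^n$, where each edge $e\in E$ is the line segment in $\mathbb{R}^n$ joining its two endpoints and has positive length $w_e$. $\mathbb{G}$ is identified with the set of all nodes together with all points of all edges, with the Euclidean-induced topology, and carries the graph metric $d_{\mathbb{G}}(x,y)$ = length of a shortest path from $x$ to $y$ in $\mathbb{G}$. There is a fixed root node $z_0\in V$ such that for every $x\in\mathbb{G}$ the shortest path $[z_0,x]$ from $z_0$ to $x$ is unique. For $x\in\mathbb{G}$ let $\Lambda(x) := \{y\in\mathbb{G} : x\in[z_0,y]\}$. For a nonnegative Borel measure $\lambda$ on $\mathbb{G}$ and $1\le p\le\infty$, a continuous $f:\mathbb{G}\to\mathbb{R}$ belongs to the Sobolev space $W^{1,p}(\mathbb{G},\lambda)$ if there is $h\in L^p(\mathbb{G},\lambda)$ with $f(x)-f(z_0) = \int_{[z_0,x]} h(y)\,\lambda(dy)$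 for all $x\in\mathbb{G}$; this $h$ is unique in $L^p(\mathbb{G},\lambda)$ and is denoted $f'$ (the graph derivative). $W^{1,p}_0(\mathbb{G},\lambda)$ is the subspace of $f\in W^{1,p}(\mathbb{G},\lambda)$ with $f(z_0)=0$. The Sobolev norm is $\|f\|_{W^{1,p}} := (\|f\|_{L^p}^p + \|f'\|_{L^p}^p)^{1/p}$, where $\|\cdot\|_{L^p}$ is the $L^p(\mathbb{G},\lambda)$ norm. The weight function is $\hat w(x) := 1 + \lambda(\Lambda(x))$ for $x\in\mathbb{G}$, and the weighted norm is $\|g\|_{L^p_{\hat w}} := \left(\int_{\mathbb{G}} \hat w(x)|g(x)|^p\,\lambda(dx)\right)^{1/p}$. *)

theory Defs
  imports "HOL-Analysis.Analysis" "HOL-Probability.Probability"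
begin

text \<open>A graph is given by a set of nodes V and a set E of edges, each edge being a
  two-element set {u,v} of nodes; the edge is the straight line segment joining u and v,
  and its length is the Euclidean length dist u v.\<close>

definition graph_points :: "'a::euclidean_space set \<Rightarrow> 'a set set \<Rightarrow> 'a set" where
  "graph_points V E = V \<union> \<Union>{closed_segment u v | u v. {u, v} \<in> E}"

definition wf_graph :: "'a::euclidean_space set \<Rightarrow> 'a set set \<Rightarrow> bool" where
  "wf_graph V E \<longleftrightarrow>
     finite V \<and> V \<noteq> {} \<and>
     (\<forall>e\<in>E. \<exists>u v. e = {u, v} \<and> u \<in> V \<and> v \<in> V \<and> u \<noteq> v) \<and>
     \<comment> \<open>no node lies in the interior of an edge\<close>
     (\<forall>u v. {u, v} \<in> E \<longrightarrow> V \<inter> closed_segment u v \<subseteq> {u, v}) \<and>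
     \<comment> \<open>distinct edges meet only in common endpoints\<close>
     (\<forall>u v u' v'. {u, v} \<in> E \<longrightarrow> {u', v'} \<in> E \<longrightarrow> {u, v} \<noteq> {u', v'} \<longrightarrow>
         closed_segment u v \<inter> closed_segment u' v' \<subseteq> {u, v} \<inter> {u', v'}) \<and>
     \<comment> \<open>connectedness\<close>
     (\<forall>u\<in>V. \<forall>v\<in>V. (u, v) \<in> {(a, b). {a, b} \<in> E}\<^sup>*)"

definition gpath :: "'a::euclidean_space set set \<Rightarrow> 'a \<Rightarrow> 'a list \<Rightarrow> 'a \<Rightarrow> bool" where
  "gpath E z0 vs x \<longleftrightarrow>
     vs \<noteq> [] \<and> hd vs = z0 \<and> distinct vs \<and>
     (\<forall>i. Suc i < length vs \<longrightarrow> {vs ! i, vs ! Suc i} \<in> E) \<and>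
     (x = last vs \<or> (\<exists>w. {last vs, w} \<in> E \<and> x \<in> closed_segment (last vs) w))"

definition gpath_set :: "'a::euclidean_space list \<Rightarrow> 'a \<Rightarrow> 'a set" where
  "gpath_set vs x =
     \<Union>{closed_segment (vs ! i) (vs ! Suc i) | i. Suc i < length vs} \<union> closed_segment (last vs) x"

definition gpath_len :: "'a::euclidean_space list \<Rightarrow> 'a \<Rightarrow> real" where
  "gpath_len vs x = (\<Sum>i<length vs - 1. dist (vs ! i) (vs ! Suc i)) + dist (last vs) x"

definition is_shortest :: "'a::euclidean_space set set \<Rightarrow> 'a \<Rightarrow> 'a list \<Rightarrow> 'a \<Rightarrow> bool" where
  "is_shortest E z0 vs x \<longleftrightarrow>
     gpath E z0 vs x \<and> (\<forall>ws. gpath E z0 ws x \<longrightarrow> gpath_len vs x \<le> gpath_len ws x)"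

definition unique_shortest_paths :: "'a::euclidean_space set \<Rightarrow> 'a set set \<Rightarrow> 'a \<Rightarrow> bool" where
  "unique_shortest_paths V E z0 \<longleftrightarrow>
     (\<forall>x\<in>graph_points V E. \<forall>vs ws. is_shortest E z0 vs x \<longrightarrow> is_shortest E z0 ws x \<longrightarrow>
         gpath_set vs x = gpath_set ws x)"

definition spath :: "'a::euclidean_space set set \<Rightarrow> 'a \<Rightarrow> 'a \<Rightarrow> 'a set" where
  "spath E z0 x = (THE S. \<exists>vs. is_shortest E z0 vs x \<and> S = gpath_set vs x)"

definition Lambda_set :: "'a::euclidean_space set \<Rightarrow> 'a set set \<Rightarrow> 'a \<Rightarrow> 'a \<Rightarrow> 'a set" where
  "Lambda_set V E z0 x = {y \<in> graph_points V E. x \<in> spath E z0 y}"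

definition W1p0_deriv ::
  "'a::euclidean_space set \<Rightarrow> 'a set set \<Rightarrow> 'a \<Rightarrow> 'a measure \<Rightarrow> real \<Rightarrow> ('a \<Rightarrow> real) \<Rightarrow> ('a \<Rightarrow> real) \<Rightarrow> bool"
where
  "W1p0_deriv V E z0 M p f h \<longleftrightarrow>
     continuous_on (graph_points V E) f \<and>
     h \<in> borel_measurable M \<and> integrable M (\<lambda>x. \<bar>h x\<bar> powr p) \<and>
     (\<forall>x\<in>graph_points V E. f x - f z0 = (\<integral>y\<in>spath E z0 x. h y \<partial>M)) \<and>
     f z0 = 0"

definition Lp_norm :: "'a measure \<Rightarrow> real \<Rightarrow> ('a \<Rightarrow> real) \<Rightarrow> real" where
  "Lp_norm M p g = (\<integral>x. \<bar>g x\<bar> powr p \<partial>M) powr (1 / p)"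

definition W1p_norm :: "'a measure \<Rightarrow> real \<Rightarrow> ('a \<Rightarrow> real) \<Rightarrow> ('a \<Rightarrow> real) \<Rightarrow> real" where
  "W1p_norm M p f f' = ((\<integral>x. \<bar>f x\<bar> powr p \<partial>M) + (\<integral>x. \<bar>f' x\<bar> powr p \<partial>M)) powr (1 / p)"

definition what :: "'a::euclidean_space set \<Rightarrow> 'a set set \<Rightarrow> 'a \<Rightarrow> 'a measure \<Rightarrow> 'a \<Rightarrow> real" where
  "what V E z0 M x = 1 + measure M (Lambda_set V E z0 x)"

definition weighted_Lp_norm ::
  "'a::euclidean_space set \<Rightarrow> 'a set set \<Rightarrow> 'a \<Rightarrow> 'a measure \<Rightarrow> real \<Rightarrow> ('a \<Rightarrow> real) \<Rightarrow> real" where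
  "weighted_Lp_norm V E z0 M p g = (\<integral>x. what V E z0 M x * \<bar>g x\<bar> powr p \<partial>M) powr (1 / p)"

text \<open>Real power with the convention t^0 = 1 (also for t = 0), as used in the paper's
  constants; Isabelle's powr has 0 powr 0 = 0.\<close>

definition rpow :: "real \<Rightarrow> real \<Rightarrow> real" where
  "rpow t a = (if a = 0 then 1 else t powr a)"

end

theory Submission
  imports Defs
begin

text \<open>Since f z0 = 0, f x is the integral of f' over the shortest path [z0,x], so Jensen's
  inequality on that path gives |f x|^p \<le> \<lambda>([z0,x])^(p-1) * (integral of |f'|^p over [z0,x]).
  Integrating in x and exchanging the order of integration (y \<in> [z0,x] iff x \<in> \<Lambda>(y)) bounds
  the integral of |f|^p by max(1, \<lambda>(G)^(p-1)) times the integral of \<lambda>(\<Lambda>(y)) |f'(y)|^p, which is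
  the upper estimate. The lower one only uses \<lambda>(\<Lambda>(y)) \<le> \<lambda>(G). Fubini applies because the set of
  pairs (x,y) with y \<in> [z0,x] is Borel: it is a finite union over the possible node sequences
  of shortest paths, each piece being cut out by closed conditions.\<close>

lemma wf_graph_edge_nodes:
  assumes "wf_graph V E" "{u, v} \<in> E"
  shows "u \<in> V" "v \<in> V"
proof -
  obtain a b where "{u, v} = {a, b}" "a \<in> V" "b \<in> V"
    using assms unfolding wf_graph_def by meson
  then show "u \<in> V" "v \<in> V" by (auto simp: doubleton_eq_iff)
qed

lemma wf_graph_finite: "wf_graph V E \<Longrightarrow> finite V"
  by (simp add: wf_graph_def)

lemma wf_graph_connected:
  "wf_graph V E \<Longrightarrow> u \<in> V \<Longrightarrow> v \<in> V \<Longrightarrow> (u, v) \<in> {(a, b). {a, b} \<in> E}\<^sup>*"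
  by (simp add: wf_graph_def)

lemma gpath_nodes_subset:
  assumes "wf_graph V E" "z0 \<in> V" "gpath E z0 ws x"
  shows "set ws \<subseteq> V"
proof
  fix a assume "a \<in> set ws"
  then obtain i where i: "i < length ws" "ws ! i = a" by (auto simp: in_set_conv_nth)
  show "a \<in> V"
  proof (cases i)
    case 0
    then show ?thesis using i assms(2,3) by (auto simp: gpath_def hd_conv_nth)
  next
    case (Suc j)
    then have "{ws ! j, ws ! i} \<in> E" using i assms(3) by (auto simp: gpath_def)
    then show ?thesis using wf_graph_edge_nodes[OF assms(1)] i by blast
  qed
qed

lemma nodes_subset_graph_points: "V \<subseteq> graph_points V E"
  unfolding graph_points_def by blast

lemma edge_segment_subset_graph_points:
  "{u, v} \<in> E \<Longrightarrow> closed_segment u v \<subseteq> graph_points V E"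
  unfolding graph_points_def by blast

lemma gpath_last_node:
  assumes "wf_graph V E" "z0 \<in> V" "gpath E z0 vs x"
  shows "last vs \<in> V"
proof -
  have "vs \<noteq> []" using assms(3) by (simp add: gpath_def)
  then show ?thesis using gpath_nodes_subset[OF assms] by auto
qed

lemma gpath_set_subset_graph_points:
  assumes "wf_graph V E" "z0 \<in> V" "gpath E z0 vs x"
  shows "gpath_set vs x \<subseteq> graph_points V E"
proof -
  have "closed_segment (vs ! i) (vs ! Suc i) \<subseteq> graph_points V E" if "Suc i < length vs" for i
    using that assms(3) by (intro edge_segment_subset_graph_points) (simp add: gpath_def)
  moreover have "closed_segment (last vs) x \<subseteq> graph_points V E"
  proof (cases "x = last vs")
    case True
    then show ?thesis using gpath_last_node[OF assms] nodes_subset_graph_points by auto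
  next
    case False
    then obtain w where "{last vs, w} \<in> E" "x \<in> closed_segment (last vs) w"
      using assms(3) by (auto simp: gpath_def)
    moreover from this(2) have "closed_segment (last vs) x \<subseteq> closed_segment (last vs) w"
      by (simp add: subset_closed_segment)
    ultimately show ?thesis using edge_segment_subset_graph_points by blast
  qed
  ultimately show ?thesis unfolding gpath_set_def by blast
qed

lemma gpath_endpoint_in_graph:
  assumes "wf_graph V E" "z0 \<in> V" "gpath E z0 vs x"
  shows "x \<in> graph_points V E"
  using gpath_set_subset_graph_points[OF assms] by (auto simp: gpath_set_def)

lemma gpath_to_reachable_node:
  assumes "(z0, v) \<in> {(a, b). {a, b} \<in> E}\<^sup>*"
  shows "\<exists>vs. gpath E z0 vs v \<and> last vs = v"
  using assms
proof (induction rule: rtrancl_induct)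
  case base
  show ?case by (rule exI[of _ "[z0]"]) (simp add: gpath_def)
next
  case (step a b)
  then obtain vs where vs: "gpath E z0 vs a" "last vs = a" by blast
  show ?case
  proof (cases "b \<in> set vs")
    case True
    then obtain i where i: "i < length vs" "vs ! i = b" by (auto simp: in_set_conv_nth)
    have last: "last (take (Suc i) vs) = b"
      using i by (simp add: take_Suc_conv_app_nth)
    moreover have "gpath E z0 (take (Suc i) vs) b"
      using vs i last unfolding gpath_def by (auto simp: hd_take)
    ultimately show ?thesis by blast
  next
    case False
    have "{(vs @ [b]) ! k, (vs @ [b]) ! Suc k} \<in> E" if "Suc k < length (vs @ [b])" for k
    proof (cases "Suc k < length vs")
      case True
      then show ?thesis using vs by (auto simp: gpath_def nth_append)
    next
      case False
      then have "k = length vs - 1" "vs \<noteq> []" using that vs by (auto simp: gpath_def)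
      then show ?thesis using vs step(2) by (auto simp: nth_append last_conv_nth)
    qed
    then have "gpath E z0 (vs @ [b]) b" using vs False by (auto simp: gpath_def)
    then show ?thesis by auto
  qed
qed

lemma gpath_exists:
  assumes "wf_graph V E" "z0 \<in> V" "x \<in> graph_points V E"
  shows "\<exists>vs. gpath E z0 vs x"
proof -
  have reach: "\<exists>vs. gpath E z0 vs v \<and> last vs = v" if "v \<in> V" for v
    by (rule gpath_to_reachable_node[OF wf_graph_connected[OF assms(1,2) that]])
  from assms(3) consider "x \<in> V" | u v where "{u, v} \<in> E" "x \<in> closed_segment u v"
    unfolding graph_points_def by blast
  then show ?thesis
  proof cases
    case 1
    then show ?thesis using reach by blast
  next
    case 2
    then obtain vs where "gpath E z0 vs u" "last vs = u"
      using reach wf_graph_edge_nodes[OF assms(1)] by blast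
    then have "gpath E z0 vs x" using 2 by (auto simp: gpath_def)
    then show ?thesis by blast
  qed
qed

definition simple_node_lists :: "'a set \<Rightarrow> 'a list set" where
  "simple_node_lists V = {ws. set ws \<subseteq> V \<and> distinct ws}"

lemma finite_simple_node_lists: "finite V \<Longrightarrow> finite (simple_node_lists V)"
  unfolding simple_node_lists_def by (rule finite_subset_distinct)

lemma gpath_in_simple_node_lists:
  "wf_graph V E \<Longrightarrow> z0 \<in> V \<Longrightarrow> gpath E z0 ws x \<Longrightarrow> ws \<in> simple_node_lists V"
  using gpath_nodes_subset unfolding simple_node_lists_def gpath_def by blast

lemma is_shortest_exists:
  assumes "wf_graph V E" "z0 \<in> V" "x \<in> graph_points V E"
  shows "\<exists>vs. is_shortest E z0 vs x"
proof -
  define P where "P = {ws \<in> simple_node_lists V. gpath E z0 ws x}"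
  have "finite P"
    unfolding P_def using finite_simple_node_lists[OF wf_graph_finite[OF assms(1)]] by simp
  moreover have "P \<noteq> {}"
    using gpath_exists[OF assms] gpath_in_simple_node_lists[OF assms(1,2)] unfolding P_def by blast
  ultimately obtain vs where "is_arg_min (\<lambda>ws. gpath_len ws x) (\<lambda>ws. ws \<in> P) vs"
    using ex_is_arg_min_if_finite by blast
  then have "is_shortest E z0 vs x"
    using gpath_in_simple_node_lists[OF assms(1,2)]
    unfolding is_shortest_def P_def is_arg_min_linorder by blast
  then show ?thesis by blast
qed

lemma spath_eq_gpath_set:
  assumes "unique_shortest_paths V E z0" "x \<in> graph_points V E" "is_shortest E z0 vs x"
  shows "spath E z0 x = gpath_set vs x"
  unfolding spath_def
proof (rule the_equality)
  show "\<exists>ws. is_shortest E z0 ws x \<and> gpath_set vs x = gpath_set ws x"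
    using assms(3) by blast
  fix S
  assume "\<exists>ws. is_shortest E z0 ws x \<and> S = gpath_set ws x"
  then obtain ws where "is_shortest E z0 ws x" "S = gpath_set ws x" by blast
  with assms show "S = gpath_set vs x" unfolding unique_shortest_paths_def by blast
qed

section \<open>Borel measurability of shortest paths\<close>

lemma closed_gpath_endpoints:
  assumes "wf_graph V E"
  shows "closed {x. gpath E z0 ws x}"
proof -
  define W where "W = {w. {last ws, w} \<in> E}"
  have "W \<subseteq> V" unfolding W_def using wf_graph_edge_nodes(2)[OF assms] by blast
  then have "finite W" using wf_graph_finite[OF assms] finite_subset by metis
  then have "closed (insert (last ws) (\<Union>w\<in>W. closed_segment (last ws) w))"
    by (intro closed_insert closed_UN) auto
  moreover have "{x. gpath E z0 ws x} = (if gpath E z0 ws (last ws)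
      then insert (last ws) (\<Union>w\<in>W. closed_segment (last ws) w) else {})"
    unfolding gpath_def W_def by auto
  ultimately show ?thesis by simp
qed

lemma closed_gpath_len_le: "closed {x. gpath_len vs x \<le> gpath_len ws x}"
  unfolding gpath_len_def by (intro closed_Collect_le continuous_intros)

lemma closed_path_segments:
  fixes vs :: "'a::real_normed_vector list"
  shows "closed (\<Union>{closed_segment (vs ! i) (vs ! Suc i) | i. Suc i < length vs})"
proof -
  have eq: "\<Union>{closed_segment (vs ! i) (vs ! Suc i) | i. Suc i < length vs}
      = (\<Union>i\<in>{i. Suc i < length vs}. closed_segment (vs ! i) (vs ! Suc i))" by blast
  have "finite {i. Suc i < length vs}" by (rule finite_subset[of _ "{..<length vs}"]) auto
  then show ?thesis unfolding eq by (intro closed_UN) auto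
qed

lemma closed_gpath_set: "closed (gpath_set vs (x::'a::euclidean_space))"
  unfolding gpath_set_def by (intro closed_Un closed_path_segments closed_segment)

lemma closed_gpath_set_graph: "closed {(x, y). y \<in> gpath_set vs (x::'a::euclidean_space)}"
proof -
  have "{(x, y). y \<in> gpath_set vs x} =
      UNIV \<times> \<Union>{closed_segment (vs ! i) (vs ! Suc i) | i. Suc i < length vs} \<union>
      {z. dist (last vs) (fst z) = dist (last vs) (snd z) + dist (snd z) (fst z)}"
    \<comment> \<open>the last piece is snd z \<in> closed_segment (last vs) (fst z), rewritten to be visibly closed\<close>
    unfolding gpath_set_def using between[of "last vs"] unfolding between_def
    by (auto simp: mem_Times_iff)
  then show ?thesis
    by (simp only:) (intro closed_Un closed_Times closed_UNIV closed_path_segments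
        closed_Collect_eq continuous_intros)
qed

lemma is_shortest_borel:
  assumes "wf_graph V E" "z0 \<in> V"
  shows "{x. is_shortest E z0 vs x} \<in> sets borel"
proof -
  have eq: "{x. is_shortest E z0 vs x} = {x. gpath E z0 vs x} \<inter>
     (\<Inter>ws\<in>simple_node_lists V. - {x. gpath E z0 ws x} \<union> {x. gpath_len vs x \<le> gpath_len ws x})"
    unfolding is_shortest_def using gpath_in_simple_node_lists[OF assms] by blast
  have "[] \<in> simple_node_lists V"
    by (simp add: simple_node_lists_def)
  then show ?thesis unfolding eq
    by (intro sets.Int sets.finite_INT sets.Un borel_comp borel_closed
        finite_simple_node_lists[OF wf_graph_finite[OF assms(1)]]
        closed_gpath_endpoints[OF assms(1)] closed_gpath_len_le) auto
qed

definition spath_pairs :: "'a::euclidean_space set \<Rightarrow> 'a set set \<Rightarrow> 'a \<Rightarrow> ('a \<times> 'a) set" where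
  "spath_pairs V E z0 = {(x, y). x \<in> graph_points V E \<and> y \<in> spath E z0 x}"

lemma spath_pairs_eq_UN:
  assumes "wf_graph V E" "z0 \<in> V" "unique_shortest_paths V E z0"
  shows "spath_pairs V E z0 = (\<Union>vs\<in>simple_node_lists V.
      ({x. is_shortest E z0 vs x} \<times> UNIV) \<inter> {(x, y). y \<in> gpath_set vs x})"
proof safe
  fix x y assume "(x, y) \<in> spath_pairs V E z0"
  then have x: "x \<in> graph_points V E" and y: "y \<in> spath E z0 x"
    unfolding spath_pairs_def by auto
  obtain vs where vs: "is_shortest E z0 vs x" using is_shortest_exists[OF assms(1,2) x] ..
  then have "vs \<in> simple_node_lists V"
    using gpath_in_simple_node_lists[OF assms(1,2)] by (auto simp: is_shortest_def)
  moreover have "y \<in> gpath_set vs x" using y spath_eq_gpath_set[OF assms(3) x vs] by simp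
  ultimately show "(x, y) \<in> (\<Union>vs\<in>simple_node_lists V.
      ({x. is_shortest E z0 vs x} \<times> UNIV) \<inter> {(x, y). y \<in> gpath_set vs x})"
    using vs by blast
next
  fix vs x y
  assume vs: "is_shortest E z0 vs x" and y: "y \<in> gpath_set vs x"
  have x: "x \<in> graph_points V E"
    using gpath_endpoint_in_graph[OF assms(1,2)] vs by (auto simp: is_shortest_def)
  then show "(x, y) \<in> spath_pairs V E z0"
    using y spath_eq_gpath_set[OF assms(3) x vs] unfolding spath_pairs_def by simp
qed

lemma spath_pairs_borel:
  assumes "wf_graph V E" "z0 \<in> V" "unique_shortest_paths V E z0"
  shows "spath_pairs V E z0 \<in> sets borel"
  unfolding spath_pairs_eq_UN[OF assms]
proof (intro sets.finite_UN sets.Int)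
  show "finite (simple_node_lists V)"
    by (rule finite_simple_node_lists[OF wf_graph_finite[OF assms(1)]])
  fix vs
  have "{x. is_shortest E z0 vs x} \<times> (UNIV :: 'a set) \<in> sets (borel \<Otimes>\<^sub>M borel)"
    using is_shortest_borel[OF assms(1,2)] by (intro pair_measureI) auto
  then show "{x. is_shortest E z0 vs x} \<times> (UNIV :: 'a set) \<in> sets borel"
    by (metis borel_prod)
  show "{(x, y). y \<in> gpath_set vs x} \<in> sets borel"
    by (rule borel_closed[OF closed_gpath_set_graph])
qed

lemma spath_subset_graph_points:
  assumes "wf_graph V E" "z0 \<in> V" "unique_shortest_paths V E z0" "x \<in> graph_points V E"
  shows "spath E z0 x \<subseteq> graph_points V E"
proof -
  obtain vs where vs: "is_shortest E z0 vs x" using is_shortest_exists[OF assms(1,2,4)] ..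
  then show ?thesis
    using gpath_set_subset_graph_points[OF assms(1,2)] spath_eq_gpath_set[OF assms(3,4)]
    by (auto simp: is_shortest_def)
qed

lemma spath_borel:
  assumes "wf_graph V E" "z0 \<in> V" "unique_shortest_paths V E z0" "x \<in> graph_points V E"
  shows "spath E z0 x \<in> sets borel"
proof -
  obtain vs where vs: "is_shortest E z0 vs x" using is_shortest_exists[OF assms(1,2,4)] ..
  then show ?thesis
    using spath_eq_gpath_set[OF assms(3,4)] by (simp add: borel_closed closed_gpath_set)
qed

lemma le_one_plus_powr:
  fixes t p :: real
  assumes "0 \<le> t" "1 \<le> p"
  shows "t \<le> 1 + t powr p"
proof (cases "t \<le> 1")
  case False
  then have "t powr 1 \<le> t powr p" using assms by (intro powr_mono) auto
  then show ?thesis using False by simp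
qed (simp add: add_increasing2)

lemma powr_diff_one_mult_self:
  fixes x p :: real
  assumes "0 \<le> x"
  shows "x powr (p - 1) * x = x powr p"
  using powr_add[of x "p - 1" 1] assms by (cases "x = 0") auto

lemma powr_above_tangent:
  fixes s t p :: real
  assumes "0 < s" "0 \<le> t" "1 \<le> p"
  shows "s powr p + p * s powr (p - 1) * (t - s) \<le> t powr p"
proof (cases "t = 0")
  case True
  have "s powr p + p * s powr (p - 1) * (t - s) = s powr p - p * (s powr (p - 1) * s)"
    using True by (simp add: algebra_simps)
  also have "\<dots> = (1 - p) * s powr p"
    by (simp only: powr_diff_one_mult_self[OF less_imp_le[OF assms(1)]]) (simp add: algebra_simps)
  also have "\<dots> \<le> 0" using assms(3) by (simp add: mult_nonpos_nonneg)
  finally show ?thesis using True by simp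
next
  case False
  have "p * s powr (p - 1) * (t - s) \<le> t powr p - s powr p"
  proof (rule convex_on_imp_above_tangent[OF powr_convex[OF assms(3)]])
    show "connected {0::real<..}" by (simp add: is_interval_connected)
    show "s \<in> interior {0<..}" using assms(1) by (simp add: interior_open)
    show "t \<in> {0<..}" using assms(2) False by simp
    show "((\<lambda>x. x powr p) has_field_derivative p * s powr (p - 1)) (at s within {0<..})"
      using assms(1) by (rule has_field_derivative_at_within[OF has_real_derivative_powr])
  qed
  then show ?thesis by simp
qed

lemma min_rpow_mult_le:
  fixes L p :: real
  assumes L: "0 \<le> L" and p: "1 \<le> p"
  shows "min 1 (rpow L (p - 1)) * (1 + L) \<le> 1 + L powr p"
proof (cases "p = 1 \<or> 1 < L")
  case True
  have "min 1 (rpow L (p - 1)) * (1 + L) \<le> 1 * (1 + L)"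
    using L by (intro mult_right_mono) auto
  moreover have "L \<le> L powr p"
    using True L powr_mono[OF p, of L] by auto
  ultimately show ?thesis by simp
next
  case False
  then have "min 1 (rpow L (p - 1)) * (1 + L) \<le> L powr (p - 1) * (1 + L)"
    using L by (intro mult_right_mono) (auto simp: rpow_def)
  also have "\<dots> = L powr (p - 1) + L powr p"
    using powr_diff_one_mult_self[OF L] by (simp add: distrib_left)
  also have "\<dots> \<le> 1 + L powr p"
    using False L p by (simp add: powr_le1)
  finally show ?thesis .
qed

lemma powr_le_max_rpow:
  fixes m L p :: real
  assumes "0 \<le> m" "m \<le> L" "1 \<le> p"
  shows "m powr (p - 1) \<le> max 1 (rpow L (p - 1))"
proof (cases "p = 1")
  case False
  then have "m powr (p - 1) \<le> L powr (p - 1)" using assms by (intro powr_mono2) auto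
  then show ?thesis using False by (simp add: rpow_def)
qed (simp add: rpow_def)

text \<open>F, B and Q stand for the integrals of |f|^p, of |f'|^p and of \<lambda>(\<Lambda>(y)) |f'(y)|^p.\<close>

lemma norm_equivalence_from_bounds:
  fixes F B Q L p :: real
  assumes "0 \<le> F" "0 \<le> B" "0 \<le> Q" "0 \<le> L" "1 \<le> p"
    and F: "F \<le> max 1 (rpow L (p - 1)) * Q" and Q: "Q \<le> L * B"
  shows "(min 1 (rpow L (p - 1)) / (1 + L powr p)) powr (1 / p) * (B + Q) powr (1 / p)
           \<le> (F + B) powr (1 / p)
       \<and> (F + B) powr (1 / p) \<le> (max 1 (rpow L (p - 1))) powr (1 / p) * (B + Q) powr (1 / p)"
proof
  define c where "c = min 1 (rpow L (p - 1)) / (1 + L powr p)"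
  have "0 \<le> c" by (simp add: c_def rpow_def)
  have "c * (1 + L) \<le> 1"
    using min_rpow_mult_le[OF assms(4,5)] by (simp add: c_def add_pos_nonneg field_simps)
  have "c * Q \<le> c * (L * B)" by (rule mult_left_mono[OF Q \<open>0 \<le> c\<close>])
  then have "c * (B + Q) \<le> (c * (1 + L)) * B" by (simp add: algebra_simps)
  also have "\<dots> \<le> 1 * B" by (rule mult_right_mono[OF \<open>c * (1 + L) \<le> 1\<close> assms(2)])
  also have "\<dots> \<le> F + B" using assms(1) by simp
  finally have "c * (B + Q) \<le> F + B" .
  then have "(c * (B + Q)) powr (1 / p) \<le> (F + B) powr (1 / p)"
    using \<open>0 \<le> c\<close> assms by (intro powr_mono2) auto
  then show "c powr (1 / p) * (B + Q) powr (1 / p) \<le> (F + B) powr (1 / p)"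
    using \<open>0 \<le> c\<close> assms by (simp add: powr_mult)
next
  define K where "K = max 1 (rpow L (p - 1))"
  have "F + B \<le> K * (B + Q)"
    using F assms(2) mult_right_mono[of 1 K B] by (simp add: K_def distrib_left)
  then have "(F + B) powr (1 / p) \<le> (K * (B + Q)) powr (1 / p)"
    using assms by (intro powr_mono2) auto
  then show "(F + B) powr (1 / p) \<le> K powr (1 / p) * (B + Q) powr (1 / p)"
    using assms by (simp add: powr_mult K_def)
qed

section \<open>Integral inequalities on a finite measure space\<close>

lemma (in finite_measure) integrable_if_integrable_abs_powr:
  fixes h :: "'a \<Rightarrow> real"
  assumes "h \<in> borel_measurable M" "integrable M (\<lambda>x. \<bar>h x\<bar> powr p)" "1 \<le> p"
  shows "integrable M h"
proof (rule Bochner_Integration.integrable_bound)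
  show "integrable M (\<lambda>x. 1 + \<bar>h x\<bar> powr p)" using assms(2) by simp
  show "AE x in M. norm (h x) \<le> norm (1 + \<bar>h x\<bar> powr p)"
    using le_one_plus_powr[OF abs_ge_zero assms(3)] by (intro AE_I2) simp
qed (use assms(1) in simp)

lemma (in finite_measure) set_integral_powr_ge_tangent:
  fixes u :: "'a \<Rightarrow> real"
  assumes S: "S \<in> sets M" and u: "integrable M u" "\<And>x. 0 \<le> u x"
    and up: "integrable M (\<lambda>x. u x powr p)" and p: "1 \<le> p" and s: "0 < s"
  shows "measure M S * s powr p + p * s powr (p - 1) * ((\<integral>x. indicator S x * u x \<partial>M) - measure M S * s)
           \<le> (\<integral>x. indicator S x * u x powr p \<partial>M)"
proof -
  define c where "c = p * s powr (p - 1)"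
  have uS: "integrable M (\<lambda>x. indicator S x * u x)"
    using integrable_real_mult_indicator[OF S u(1)] by (simp add: mult.commute)
  have upS: "integrable M (\<lambda>x. indicator S x * u x powr p)"
    using integrable_real_mult_indicator[OF S up] by (simp add: mult.commute)
  have "integrable M (indicator S :: 'a \<Rightarrow> real)"
    using S by (simp add: less_top[symmetric])
  have tangent_eq: "(\<lambda>x. indicator S x * (s powr p + c * (u x - s)))
      = (\<lambda>x. (s powr p - c * s) * indicator S x + c * (indicator S x * u x))"
    by (auto simp: fun_eq_iff algebra_simps)
  have "(\<integral>x. indicator S x * (s powr p + c * (u x - s)) \<partial>M)
      = measure M S * s powr p + c * ((\<integral>x. indicator S x * u x \<partial>M) - measure M S * s)"
    unfolding tangent_eq using S uS \<open>integrable M (indicator S)\<close>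
    by (simp add: Bochner_Integration.integral_add algebra_simps)
  moreover have "integrable M (\<lambda>x. indicator S x * (s powr p + c * (u x - s)))"
    unfolding tangent_eq using uS \<open>integrable M (indicator S)\<close> by simp
  then have "(\<integral>x. indicator S x * (s powr p + c * (u x - s)) \<partial>M)
      \<le> (\<integral>x. indicator S x * u x powr p \<partial>M)"
    unfolding c_def using powr_above_tangent[OF s u(2) p] upS
    by (intro integral_mono) (auto simp: indicator_def algebra_simps)
  ultimately show ?thesis by (simp add: c_def)
qed

text \<open>Jensen's inequality for t powr p and the normalised restriction of M to S: take s to be
  the mean of u over S in the tangent bound above.\<close>

lemma (in finite_measure) set_integral_powr_le:
  fixes u :: "'a \<Rightarrow> real"
  assumes S: "S \<in> sets M" and u: "integrable M u" "\<And>x. 0 \<le> u x"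
    and up: "integrable M (\<lambda>x. u x powr p)" and p: "1 \<le> p"
  shows "(\<integral>x. indicator S x * u x \<partial>M) powr p
           \<le> measure M S powr (p - 1) * (\<integral>x. indicator S x * u x powr p \<partial>M)"
proof -
  define I where "I = (\<integral>x. indicator S x * u x \<partial>M)"
  define A where "A = (\<integral>x. indicator S x * u x powr p \<partial>M)"
  define m where "m = measure M S"
  have "0 \<le> I" unfolding I_def by (simp add: u(2))
  have "0 \<le> A" unfolding A_def by simp
  show ?thesis
  proof (cases "m = 0 \<or> I = 0")
    case True
    have "I = 0"
    proof (cases "m = 0")
      case True
      then have "AE x in M. x \<notin> S"
        using S by (intro AE_not_in) (simp add: m_def null_sets_def emeasure_eq_measure)
      then show ?thesis unfolding I_def by (intro integral_eq_zero_AE) auto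
    qed (use \<open>m = 0 \<or> I = 0\<close> in simp)
    then show ?thesis using \<open>0 \<le> A\<close> p by (simp flip: I_def A_def)
  next
    case False
    moreover have "0 \<le> m" by (simp add: m_def)
    ultimately have "0 < m" "0 < I" using \<open>0 \<le> I\<close> by auto
    define s where "s = I / m"
    have "0 < s" "m * s = I" using \<open>0 < m\<close> \<open>0 < I\<close> by (simp_all add: s_def)
    then have "m * s powr p \<le> A"
      using set_integral_powr_ge_tangent[OF S u up p \<open>0 < s\<close>] by (simp add: I_def A_def m_def)
    then have "(m powr (p - 1) * m) * s powr p \<le> m powr (p - 1) * A"
      by (simp add: mult_left_mono mult.assoc)
    moreover have "(m powr (p - 1) * m) * s powr p = I powr p"
      using powr_diff_one_mult_self[of m p] powr_mult[of m s p] \<open>0 < m\<close> \<open>0 < s\<close> \<open>m * s = I\<close>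
      by simp
    ultimately show ?thesis by (simp add: I_def A_def m_def)
  qed
qed

lemma (in finite_measure) integral_indicator_pair_swap:
  fixes g :: "'a \<Rightarrow> real"
  assumes T: "T \<in> sets (M \<Otimes>\<^sub>M M)" and g: "integrable M g"
  shows "integrable M (\<lambda>x. \<integral>y. indicator T (x, y) * g y \<partial>M)"
    and "integrable M (\<lambda>y. measure M {x \<in> space M. (x, y) \<in> T} * g y)"
    and "(\<integral>x. (\<integral>y. indicator T (x, y) * g y \<partial>M) \<partial>M)
           = (\<integral>y. measure M {x \<in> space M. (x, y) \<in> T} * g y \<partial>M)"
proof -
  interpret P: pair_sigma_finite M M
    by (intro pair_sigma_finite.intro sigma_finite_measure_axioms)
  define F where "F = (\<lambda>x y. indicator T (x, y) * g y :: real)"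
  have gm: "g \<in> borel_measurable M" using g by simp
  have "integrable (M \<Otimes>\<^sub>M M) (\<lambda>z. g (snd z))"
    by (rule P.Fubini_integrable) (use g gm in \<open>auto intro: measurable_compose[OF measurable_snd]\<close>)
  then have "integrable (M \<Otimes>\<^sub>M M) (\<lambda>z. indicator T z * g (snd z))"
  proof (rule Bochner_Integration.integrable_bound)
    show "(\<lambda>z. indicator T z * g (snd z)) \<in> borel_measurable (M \<Otimes>\<^sub>M M)"
      by (rule borel_measurable_times[OF borel_measurable_indicator[OF T]
            measurable_compose[OF measurable_snd gm]])
    show "AE z in M \<Otimes>\<^sub>M M. norm (indicator T z * g (snd z)) \<le> norm (g (snd z))"
      by (intro AE_I2) (auto simp: indicator_def)
  qed
  moreover have "case_prod F = (\<lambda>z. indicator T z * g (snd z))"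
    by (simp add: F_def fun_eq_iff split_beta)
  ultimately have F: "integrable (M \<Otimes>\<^sub>M M) (case_prod F)" by simp
  have integral_section: "(\<integral>x. F x y \<partial>M) = measure M {x \<in> space M. (x, y) \<in> T} * g y" for y
  proof -
    have "(\<integral>x. F x y \<partial>M) = (\<integral>x. indicator {x. (x, y) \<in> T} x \<partial>M) * g y"
      unfolding F_def by (simp add: indicator_def)
    moreover have "{x. (x, y) \<in> T} \<inter> space M = {x \<in> space M. (x, y) \<in> T}" by blast
    ultimately show ?thesis by simp
  qed
  show "integrable M (\<lambda>x. \<integral>y. indicator T (x, y) * g y \<partial>M)"
    using P.integrable_fst[OF F] by (simp add: F_def)
  show "integrable M (\<lambda>y. measure M {x \<in> space M. (x, y) \<in> T} * g y)"
    using P.integrable_snd[OF F] by (simp add: integral_section)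
  have "(\<integral>x. (\<integral>y. F x y \<partial>M) \<partial>M) = (\<integral>y. (\<integral>x. F x y \<partial>M) \<partial>M)"
    using P.integral_fst[OF F] P.integral_snd[OF F] by simp
  then show "(\<integral>x. (\<integral>y. indicator T (x, y) * g y \<partial>M) \<partial>M)
           = (\<integral>y. measure M {x \<in> space M. (x, y) \<in> T} * g y \<partial>M)"
    by (simp add: integral_section) (simp add: F_def)
qed

section \<open>A finite measure on the graph\<close>

locale rooted_graph_measure =
  fixes V :: "'a::euclidean_space set" and E :: "'a set set" and z0 :: 'a and M :: "'a measure"
  assumes wf_graph: "wf_graph V E" and root_node: "z0 \<in> V"
    and unique_shortest: "unique_shortest_paths V E z0"
    and space_M: "space M = graph_points V E"
    and sets_M: "sets M = sets (restrict_space borel (graph_points V E))"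
    and finite_M: "emeasure M (graph_points V E) < \<infinity>"
begin

sublocale finite_measure M
  by (rule finite_measureI) (use finite_M space_M in simp)

lemma borel_measurable_id: "(\<lambda>x. x) \<in> borel_measurable M"
proof -
  have "(\<lambda>x. x) \<in> borel_measurable (restrict_space borel (graph_points V E))"
    by (rule measurable_restrict_space1) simp
  then show ?thesis by (subst measurable_cong_sets[OF sets_M refl])
qed

lemma borel_in_sets:
  assumes "A \<in> sets borel" "A \<subseteq> space M"
  shows "A \<in> sets M"
proof -
  have "(\<lambda>x. x) -` A \<inter> space M \<in> sets M"
    by (rule measurable_sets[OF borel_measurable_id assms(1)])
  then show ?thesis using assms(2) by (simp add: Int_absorb2)
qed

lemma borel_in_pair_sets:
  assumes "A \<in> sets borel" "A \<subseteq> space (M \<Otimes>\<^sub>M M)"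
  shows "A \<in> sets (M \<Otimes>\<^sub>M M)"
proof -
  have "(\<lambda>z. (fst z, snd z)) \<in> borel_measurable (M \<Otimes>\<^sub>M M)"
    by (intro borel_measurable_Pair measurable_compose[OF measurable_fst borel_measurable_id]
        measurable_compose[OF measurable_snd borel_measurable_id])
  then have "(\<lambda>z. z) -` A \<inter> space (M \<Otimes>\<^sub>M M) \<in> sets (M \<Otimes>\<^sub>M M)"
    by (intro measurable_sets[OF _ assms(1)]) simp
  then show ?thesis using assms(2) by (simp add: Int_absorb2)
qed

lemma spath_subset_space: "x \<in> space M \<Longrightarrow> spath E z0 x \<subseteq> space M"
  using spath_subset_graph_points[OF wf_graph root_node unique_shortest] space_M by simp

lemma spath_in_sets: "x \<in> space M \<Longrightarrow> spath E z0 x \<in> sets M"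
  using spath_borel[OF wf_graph root_node unique_shortest] spath_subset_space space_M
  by (simp add: borel_in_sets)

lemma spath_pairs_in_sets: "spath_pairs V E z0 \<in> sets (M \<Otimes>\<^sub>M M)"
proof (rule borel_in_pair_sets)
  show "spath_pairs V E z0 \<in> sets borel"
    by (rule spath_pairs_borel[OF wf_graph root_node unique_shortest])
  show "spath_pairs V E z0 \<subseteq> space (M \<Otimes>\<^sub>M M)"
    using spath_subset_space space_M by (auto simp: spath_pairs_def space_pair_measure)
qed

lemma Lambda_set_eq_section:
  "Lambda_set V E z0 y = {x \<in> space M. (x, y) \<in> spath_pairs V E z0}"
  using space_M by (auto simp: Lambda_set_def spath_pairs_def)

lemma indicator_spath_pairs:
  "x \<in> space M \<Longrightarrow> indicator (spath_pairs V E z0) (x, y) = indicator (spath E z0 x) y"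
  using space_M by (simp add: spath_pairs_def indicator_def)

lemma abs_powr_le_spath_integral:
  assumes p: "1 \<le> p" and f: "W1p0_deriv V E z0 M p f h" and x: "x \<in> space M"
  shows "\<bar>f x\<bar> powr p \<le> max 1 (rpow (measure M (space M)) (p - 1))
           * (\<integral>y. indicator (spath E z0 x) y * \<bar>h y\<bar> powr p \<partial>M)"
proof -
  define S where "S = spath E z0 x"
  have S: "S \<in> sets M" unfolding S_def by (rule spath_in_sets[OF x])
  have hm: "h \<in> borel_measurable M" and hp: "integrable M (\<lambda>y. \<bar>h y\<bar> powr p)"
    and f_eq: "f x = (\<integral>y. indicator S y * h y \<partial>M)"
    using f x space_M by (auto simp: W1p0_deriv_def S_def set_lebesgue_integral_def)
  have "\<bar>f x\<bar> \<le> (\<integral>y. \<bar>indicator S y * h y\<bar> \<partial>M)"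
    unfolding f_eq by (rule integral_abs_bound)
  then have "\<bar>f x\<bar> powr p \<le> (\<integral>y. indicator S y * \<bar>h y\<bar> \<partial>M) powr p"
    using p by (intro powr_mono2) (auto simp: abs_mult)
  also have "\<dots> \<le> measure M S powr (p - 1) * (\<integral>y. indicator S y * \<bar>h y\<bar> powr p \<partial>M)"
    using integrable_if_integrable_abs_powr[OF hm hp p]
    by (intro set_integral_powr_le[OF S _ _ hp p]) auto
  also have "\<dots> \<le> max 1 (rpow (measure M (space M)) (p - 1))
      * (\<integral>y. indicator S y * \<bar>h y\<bar> powr p \<partial>M)"
    using bounded_measure[of S] p by (intro mult_right_mono powr_le_max_rpow) auto
  finally show ?thesis unfolding S_def .
qed

lemma integral_abs_powr_le_weighted:
  assumes p: "1 \<le> p" and f: "W1p0_deriv V E z0 M p f h"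
  shows "(\<integral>x. \<bar>f x\<bar> powr p \<partial>M) \<le> max 1 (rpow (measure M (space M)) (p - 1))
           * (\<integral>y. measure M (Lambda_set V E z0 y) * \<bar>h y\<bar> powr p \<partial>M)"
proof -
  let ?K = "max 1 (rpow (measure M (space M)) (p - 1))"
  let ?T = "spath_pairs V E z0"
  have hp: "integrable M (\<lambda>y. \<bar>h y\<bar> powr p)" using f by (simp add: W1p0_deriv_def)
  note swap = integral_indicator_pair_swap[OF spath_pairs_in_sets hp]
  have "(\<integral>x. \<bar>f x\<bar> powr p \<partial>M) \<le> (\<integral>x. ?K * (\<integral>y. indicator ?T (x, y) * \<bar>h y\<bar> powr p \<partial>M) \<partial>M)"
  proof (rule integral_mono')
    show "integrable M (\<lambda>x. ?K * (\<integral>y. indicator ?T (x, y) * \<bar>h y\<bar> powr p \<partial>M))"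
      using swap(1) by simp
    fix x assume "x \<in> space M"
    then show "\<bar>f x\<bar> powr p \<le> ?K * (\<integral>y. indicator ?T (x, y) * \<bar>h y\<bar> powr p \<partial>M)"
      using abs_powr_le_spath_integral[OF p f] by (simp add: indicator_spath_pairs)
    show "0 \<le> ?K * (\<integral>y. indicator ?T (x, y) * \<bar>h y\<bar> powr p \<partial>M)"
      by (intro mult_nonneg_nonneg Bochner_Integration.integral_nonneg) auto
  qed
  also have "\<dots> = ?K * (\<integral>y. measure M (Lambda_set V E z0 y) * \<bar>h y\<bar> powr p \<partial>M)"
    using swap(3) by (simp add: Lambda_set_eq_section)
  finally show ?thesis .
qed

lemma integrable_Lambda_weighted:
  "integrable M g \<Longrightarrow> integrable M (\<lambda>y. measure M (Lambda_set V E z0 y) * g y)"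
  using integral_indicator_pair_swap(2)[OF spath_pairs_in_sets] by (simp add: Lambda_set_eq_section)

lemma integral_what_eq:
  assumes "integrable M g"
  shows "(\<integral>x. what V E z0 M x * g x \<partial>M)
           = (\<integral>x. g x \<partial>M) + (\<integral>x. measure M (Lambda_set V E z0 x) * g x \<partial>M)"
  using Bochner_Integration.integral_add[OF assms integrable_Lambda_weighted[OF assms]]
  by (simp add: what_def distrib_right)

lemma integral_Lambda_weighted_le:
  assumes "integrable M g" "\<And>x. 0 \<le> g x"
  shows "(\<integral>x. measure M (Lambda_set V E z0 x) * g x \<partial>M) \<le> measure M (space M) * (\<integral>x. g x \<partial>M)"
proof -
  have "(\<integral>x. measure M (Lambda_set V E z0 x) * g x \<partial>M) \<le> (\<integral>x. measure M (space M) * g x \<partial>M)"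
    using integrable_Lambda_weighted[OF assms(1)] assms bounded_measure
    by (intro Bochner_Integration.integral_mono mult_right_mono) auto
  then show ?thesis by simp
qed

end

theorem theorem3p2:
  fixes V :: "'a::euclidean_space set" and E :: "'a set set" and z0 :: 'a
    and M :: "'a measure" and p :: real and f h :: "'a \<Rightarrow> real"
  assumes "wf_graph V E" and "z0 \<in> V" and "unique_shortest_paths V E z0"
    and "space M = graph_points V E"
    and "sets M = sets (restrict_space borel (graph_points V E))"
    and "emeasure M (graph_points V E) < \<infinity>"
    and "1 \<le> p"
    and "W1p0_deriv V E z0 M p f h"
  shows "(min 1 (rpow (measure M (graph_points V E)) (p - 1))
            / (1 + measure M (graph_points V E) powr p)) powr (1 / p)
           * weighted_Lp_norm V E z0 M p h \<le> W1p_norm M p f h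
       \<and> W1p_norm M p f h \<le>
           (max 1 (rpow (measure M (graph_points V E)) (p - 1))) powr (1 / p)
           * weighted_Lp_norm V E z0 M p h"
proof -
  interpret rooted_graph_measure V E z0 M
    using assms(1-6) by unfold_locales
  have hp: "integrable M (\<lambda>x. \<bar>h x\<bar> powr p)" using assms(8) by (simp add: W1p0_deriv_def)
  show ?thesis
    unfolding W1p_norm_def weighted_Lp_norm_def integral_what_eq[OF hp] space_M[symmetric]
  proof (rule norm_equivalence_from_bounds)
    show "(\<integral>x. \<bar>f x\<bar> powr p \<partial>M) \<le> max 1 (rpow (measure M (space M)) (p - 1))
        * (\<integral>x. measure M (Lambda_set V E z0 x) * \<bar>h x\<bar> powr p \<partial>M)"
      by (rule integral_abs_powr_le_weighted[OF assms(7,8)])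
    show "(\<integral>x. measure M (Lambda_set V E z0 x) * \<bar>h x\<bar> powr p \<partial>M)
        \<le> measure M (space M) * (\<integral>x. \<bar>h x\<bar> powr p \<partial>M)"
      by (rule integral_Lambda_weighted_le[OF hp]) simp
  qed (use assms(7) in \<open>auto intro!: Bochner_Integration.integral_nonneg\<close>)
qed

end
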